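(* Let $p$ be a prime, $m,t\ge1$, $R^t=\mathbb{F}_{p^m}[u]/\langle u^t\rangle$, $\omega(x)=\omega_0(x)+u\omega_1(x)+\dots+u^{t-1}\omega_{t-1}(x)\in R^t[x]$ with $\omega_i(x)\in\mathbb{F}_{p^m}[x]$, and $R^{t,\omega}=R^t[x]/\langle\omega(x)\rangle$. Let $\omega_0(x)=v_1(x)^{n_1}\cdots v_l(x)^{n_l}$ be the factorization of $\omega_0(x)$ into irreducible polynomials $v_j(x)\in\mathbb{F}_{p^m}[x]$ with positive integers $n_j$. Then the ideals of $R^{t,\omega}$ and their generators have one of the following forms. (a) The trivial ideals $\langle0\rangle$ and $\langle1\rangle$. (b) Any generator of a non-trivial ideal contained in $\langle u\rangle$ has the form $$u^{(t-1)-i}\bigl(v_1(x)^{k_{1,i}}v_2(x)^{k_{2,i}}\cdots v_l(x)^{k_{l,i}}\bigr)-u^{(t-1)-(i-1)}g(x)$$ for some $0\le i\le t-2$, $g(x)\in R^{t,\omega}$, and $0\le k_{j,i}\le n_j$ ($1\le j\le l$), not all $k_{j,i}=n_j$. In fact, any such ideal $I$ has the form $$I=\Bigl\langle u^{(t-1)-i_1}\bigl(v_1(x)^{k_{1,i_1}}\cdots v_l(x)^{k_{l,i_1}}\bigr)-u^{(t-1)-(i_1-1)}g_{i_1}(x),\ \dots,\ u^{(t-1)-i_n}\bigl(v_1(x)^{k_{1,i_n}}\cdots v_l(x)^{k_{l,i_n}}\bigr)-u^{(t-1)-(i_n-1)}g_{i_n}(x)\Bigr\rangle,$$ where $0\le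 i_1<i_2<\dots<i_n\le t-2$ and $g_{i_j}(x)\in R^{t,\omega}$ for $1\le j\le n$. (c) Any non-trivial ideal not contained in $\langle u\rangle$ has the form $$\langle v_1(x)^{k_{1}}v_2(x)^{k_{2}}\cdots v_l(x)^{k_{l}}+u\,r(x)\rangle+I,$$ where $r(x)\in R^{t,\omega}$, $0\le k_j\le n_j$, and $I$ is an ideal of $R^{t,\omega}$ contained in $\langle u\rangle$ (so $I$ is as described in (a) or (b)).
   Context: Elements of $\mathbb{F}_{p^m}[x]$ are regarded as elements of $R^{t,\omega}$ via the natural inclusion $\mathbb{F}_{p^m}\subseteq R^t$. A non-trivial ideal means an ideal different from $\langle 0\rangle$ and $\langle1\rangle$. Note $u^{t}=0$ in $R^{t,\omega}$. *)

theory Defs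
  imports "HOL-Computational_Algebra.Computational_Algebra" "HOL-Library.Cardinality"
begin

definition is_ideal :: "'b::comm_ring_1 set \<Rightarrow> bool" where
  "is_ideal I \<longleftrightarrow> 0 \<in> I \<and> (\<forall>a\<in>I. \<forall>b\<in>I. a + b \<in> I) \<and> (\<forall>a\<in>I. \<forall>r. r * a \<in> I)"

definition gen_ideal :: "'b::comm_ring_1 set \<Rightarrow> 'b set" where
  "gen_ideal S = \<Inter>{I. is_ideal I \<and> S \<subseteq> I}"

text \<open>The ring R^t[x] with R^t = F[u]/<u^t> is modelled via F[u][x] = 'a poly poly
  (outer variable x, coefficients polynomials in u), and the ideal <u^t> is added to
  the defining ideal of the quotient.\<close>

definition uvar :: "'a::comm_ring_1 poly poly" where
  "uvar = [:monom 1 1:]"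

definition emb :: "'a::comm_ring_1 poly \<Rightarrow> 'a poly poly" where
  "emb f = map_poly (\<lambda>c. [:c:]) f"

definition omega :: "nat \<Rightarrow> (nat \<Rightarrow> 'a::comm_ring_1 poly) \<Rightarrow> 'a poly poly" where
  "omega t w = (\<Sum>i<t. uvar ^ i * emb (w i))"

text \<open>Ideals of R^{t,omega} correspond
  (correspondence theorem) to ideals of F[u][x] containing the kernel below; an ideal of
  R^{t,omega} generated by (the images of) S corresponds to gen_ideal (kernel \<union> S).\<close>

definition kernel :: "nat \<Rightarrow> (nat \<Rightarrow> 'a::comm_ring_1 poly) \<Rightarrow> 'a poly poly set" where
  "kernel t w = gen_ideal {uvar ^ t, omega t w}"

definition quot_ideal :: "nat \<Rightarrow> (nat \<Rightarrow> 'a::comm_ring_1 poly) \<Rightarrow> 'a poly poly set \<Rightarrow> bool" where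
  "quot_ideal t w K \<longleftrightarrow> is_ideal K \<and> kernel t w \<subseteq> K"

definition qgen :: "nat \<Rightarrow> (nat \<Rightarrow> 'a::comm_ring_1 poly) \<Rightarrow> 'a poly poly set \<Rightarrow> 'a poly poly set" where
  "qgen t w S = gen_ideal ({uvar ^ t, omega t w} \<union> S)"

text \<open>The generator u^((t-1)-i) (v_1^k_1 ... v_l^k_l) - u^((t-1)-(i-1)) g; note (t-1)-(i-1) = t-i.\<close>

definition genb :: "nat \<Rightarrow> nat \<Rightarrow> (nat \<Rightarrow> 'a::comm_ring_1 poly) \<Rightarrow> nat \<Rightarrow> (nat \<Rightarrow> nat)
     \<Rightarrow> 'a poly poly \<Rightarrow> 'a poly poly" where
  "genb t l v i k g = uvar ^ (t - 1 - i) * emb (\<Prod>j=1..l. v j ^ k j) - uvar ^ (t - i) * g"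

definition form_b :: "nat \<Rightarrow> (nat \<Rightarrow> 'a::comm_ring_1 poly) \<Rightarrow> nat \<Rightarrow> (nat \<Rightarrow> 'a poly)
     \<Rightarrow> (nat \<Rightarrow> nat) \<Rightarrow> 'a poly poly set \<Rightarrow> bool" where
  "form_b t w l v n K \<longleftrightarrow>
     (\<exists>gs :: (nat \<times> (nat \<Rightarrow> nat) \<times> 'a poly poly) list.
        sorted_wrt (\<lambda>a b. fst a < fst b) gs \<and>
        (\<forall>(i, k, g) \<in> set gs. i + 2 \<le> t \<and> (\<forall>j\<in>{1..l}. k j \<le> n j) \<and>
                               \<not> (\<forall>j\<in>{1..l}. k j = n j)) \<and>
        K = qgen t w ((\<lambda>(i, k, g). genb t l v i k g) ` set gs))"

end

(*
  Write every element of F[u][x] as f + u y with f in F[x].  For an ideal K containing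
  <u^t, omega> and a level s, the polynomials f for which K contains some u^s f + u^(s+1) y
  form an ideal of F[x].  It contains omega_0 (because u^s omega lies in K), so it is
  generated by a divisor of omega_0, i.e. by some v_1^k_1 ... v_l^k_l.  Choose one element
  u^s v^k + u^(s+1) h of K at every level.  If K is contained in <u>, an induction on s
  shows that the elements chosen at the levels 1, ..., t-1 generate K modulo <u^t, omega>;
  a level with all k_j = n_j contributes nothing new, because there u^s omega does the same
  job.  For an arbitrary K, subtracting a multiple of the element chosen at level 0 moves
  any element of K into K \<inter> <u>.
*)
theory Submission
  imports Defs
begin

lemma is_ideal_0: "is_ideal I \<Longrightarrow> 0 \<in> I"
  unfolding is_ideal_def by blast

lemma is_ideal_add: "is_ideal I \<Longrightarrow> a \<in> I \<Longrightarrow> b \<in> I \<Longrightarrow> a + b \<in> I"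
  unfolding is_ideal_def by blast

lemma is_ideal_mult_left: "is_ideal I \<Longrightarrow> a \<in> I \<Longrightarrow> r * a \<in> I"
  unfolding is_ideal_def by blast

lemma is_ideal_mult_right: "is_ideal I \<Longrightarrow> a \<in> I \<Longrightarrow> a * r \<in> I"
  using is_ideal_mult_left[of I a r] by (simp add: mult.commute)

lemma is_ideal_diff: "is_ideal I \<Longrightarrow> a \<in> I \<Longrightarrow> b \<in> I \<Longrightarrow> a - b \<in> I"
  using is_ideal_add[of I a "(- 1) * b"] is_ideal_mult_left[of I b "- 1"] by simp

lemma is_ideal_Int: "is_ideal I \<Longrightarrow> is_ideal J \<Longrightarrow> is_ideal (I \<inter> J)"
  unfolding is_ideal_def by blast

lemma is_ideal_linear_combinations: "is_ideal {a * x + b * y | a b. True}"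
proof -
  have "0 = 0 * x + 0 * y"
    by simp
  moreover have "(a * x + b * y) + (a' * x + b' * y) = (a + a') * x + (b + b') * y"
    for a b a' b' :: 'a
    by (simp add: algebra_simps)
  moreover have "r * (a * x + b * y) = (r * a) * x + (r * b) * y" for r a b :: 'a
    by (simp add: algebra_simps)
  ultimately show ?thesis
    unfolding is_ideal_def by fast
qed

lemma gen_ideal_is_ideal: "is_ideal (gen_ideal S)"
  unfolding gen_ideal_def is_ideal_def by blast

lemma gen_ideal_superset: "S \<subseteq> gen_ideal S"
  unfolding gen_ideal_def by blast

lemma gen_ideal_minimal: "is_ideal I \<Longrightarrow> S \<subseteq> I \<Longrightarrow> gen_ideal S \<subseteq> I"
  unfolding gen_ideal_def by blast

lemma gen_ideal_mono: "S \<subseteq> T \<Longrightarrow> gen_ideal S \<subseteq> gen_ideal T"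
  unfolding gen_ideal_def by blast

lemma is_ideal_principal:
  fixes L :: "'b::euclidean_ring set"
  assumes L: "is_ideal L"
  obtains d where "d \<in> L" and "\<And>f. f \<in> L \<Longrightarrow> d dvd f"
proof (cases "L \<subseteq> {0}")
  case True
  then show ?thesis
    using that[of 0] is_ideal_0[OF L] by blast
next
  case False
  then obtain g where "g \<in> L" "g \<noteq> 0"
    by blast
  then obtain d where d: "d \<in> L" "d \<noteq> 0"
    and d_min: "\<And>g. g \<in> L \<Longrightarrow> g \<noteq> 0 \<Longrightarrow> euclidean_size d \<le> euclidean_size g"
    using ex_has_least_nat[of "\<lambda>g. g \<in> L \<and> g \<noteq> 0" g euclidean_size] by blast
  have "d dvd f" if f: "f \<in> L" for f
  proof -
    have "f mod d = f - (f div d) * d"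
      by (simp add: minus_div_mult_eq_mod)
    then have "f mod d \<in> L"
      using is_ideal_diff[OF L f is_ideal_mult_left[OF L d(1)]] by simp
    moreover have "euclidean_size (f mod d) < euclidean_size d"
      using mod_size_less[OF d(2)] .
    ultimately have "f mod d = 0"
      using d_min by (meson leD)
    then show ?thesis
      by (simp add: mod_0_imp_dvd)
  qed
  then show ?thesis
    using that d(1) by blast
qed

lemma dvd_prime_elem_power_mult_split:
  fixes p :: "'b::idom"
  assumes p: "prime_elem p"
  shows "d dvd p ^ m * a \<Longrightarrow> \<exists>i\<le>m. \<exists>d'. d = p ^ i * d' \<and> d' dvd a"
proof (induction m arbitrary: d)
  case 0
  then show ?case
    by (intro exI[of _ 0] exI[of _ d]) simp_all
next
  case (Suc m)
  have "p \<noteq> 0"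
    using p by auto
  show ?case
  proof (cases "p dvd d")
    case True
    then obtain d'' where d: "d = p * d''"
      by (auto elim: dvdE)
    with Suc.prems \<open>p \<noteq> 0\<close> have "d'' dvd p ^ m * a"
      by (simp add: mult.assoc)
    then obtain i d' where "i \<le> m" "d'' = p ^ i * d'" "d' dvd a"
      using Suc.IH by blast
    then show ?thesis
      using d by (intro exI[of _ "Suc i"]) (auto simp: mult.assoc)
  next
    case False
    from Suc.prems obtain e where e: "p * (p ^ m * a) = d * e"
      by (auto simp: mult.assoc elim: dvdE)
    then have "p dvd e"
      using False p prime_elem_dvd_mult_iff by (metis dvd_triv_left)
    then obtain e' where "e = p * e'"
      by (auto elim: dvdE)
    with e \<open>p \<noteq> 0\<close> have "d dvd p ^ m * a"
      by (simp add: ac_simps)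
    then obtain i d' where "i \<le> m" "d = p ^ i * d'" "d' dvd a"
      using Suc.IH by blast
    then have "i \<le> Suc m" "d = p ^ i * d'" "d' dvd a"
      by simp_all
    then show ?thesis
      by blast
  qed
qed

lemma dvd_prod_power_imp_associated:
  fixes v :: "'i \<Rightarrow> 'b::idom"
  assumes "finite A" and "\<forall>j\<in>A. prime_elem (v j)" and "d dvd (\<Prod>j\<in>A. v j ^ n j)"
  shows "\<exists>k. (\<forall>j\<in>A. k j \<le> n j) \<and>
    d dvd (\<Prod>j\<in>A. v j ^ k j) \<and> (\<Prod>j\<in>A. v j ^ k j) dvd d"
  using assms
proof (induction A arbitrary: d rule: finite_induct)
  case empty
  then show ?case
    by simp
next
  case (insert a A)
  have "d dvd v a ^ n a * (\<Prod>j\<in>A. v j ^ n j)"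
    using insert.prems(2) insert.hyps by simp
  with insert.prems(1) have "\<exists>i\<le>n a. \<exists>d'. d = v a ^ i * d' \<and> d' dvd (\<Prod>j\<in>A. v j ^ n j)"
    by (simp add: dvd_prime_elem_power_mult_split)
  then obtain i d' where i: "i \<le> n a" and d: "d = v a ^ i * d'" and d': "d' dvd (\<Prod>j\<in>A. v j ^ n j)"
    by blast
  obtain k where k: "\<forall>j\<in>A. k j \<le> n j" "d' dvd (\<Prod>j\<in>A. v j ^ k j)" "(\<Prod>j\<in>A. v j ^ k j) dvd d'"
    using insert.IH[OF _ d'] insert.prems(1) by blast
  define k' where "k' = k(a := i)"
  have "(\<Prod>j\<in>A. v j ^ k' j) = (\<Prod>j\<in>A. v j ^ k j)"
    using insert.hyps(2) by (intro prod.cong) (auto simp: k'_def)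
  then have "(\<Prod>j\<in>insert a A. v j ^ k' j) = v a ^ i * (\<Prod>j\<in>A. v j ^ k j)"
    using insert.hyps by (simp add: k'_def)
  then have "d dvd (\<Prod>j\<in>insert a A. v j ^ k' j) \<and> (\<Prod>j\<in>insert a A. v j ^ k' j) dvd d"
    using d k(2,3) by (simp add: mult_dvd_mono)
  moreover have "\<forall>j\<in>insert a A. k' j \<le> n j"
    using i k by (simp add: k'_def)
  ultimately show ?case
    by blast
qed

lemma emb_pCons: "emb (pCons a f) = pCons [:a:] (emb f)"
  unfolding emb_def by (simp add: map_poly_pCons)

lemma emb_add: "emb (f + g) = emb f + emb g"
  unfolding emb_def by (intro poly_eqI) (simp add: coeff_map_poly)

lemma emb_mult: "emb (f * g) = emb f * emb g"
proof (induction f)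
  case 0
  then show ?case
    by (simp add: emb_def)
next
  case (pCons a f)
  have "emb (smult a g) = smult [:a:] (emb g)"
    unfolding emb_def by (rule map_poly_smult) auto
  with pCons show ?case
    by (simp add: emb_pCons emb_add)
qed

lemma emb_uvar_decompE:
  fixes y :: "'a::comm_ring_1 poly poly"
  obtains f z where "y = emb f + uvar * z"
proof (induction y arbitrary: thesis)
  case 0
  show ?case
    by (rule 0[of 0 0]) (simp add: emb_def)
next
  case (pCons c y)
  obtain f z where y: "y = emb f + uvar * z"
    by (rule pCons.IH)
  obtain a c' where c: "c = pCons a c'"
    by (cases c) auto
  have uvar_mult: "uvar * q = smult (monom 1 1) q" for q :: "'a poly poly"
    by (simp add: uvar_def)
  have "pCons c y = emb (pCons a f) + smult (monom 1 1) (pCons c' z)"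
    using y c by (simp add: emb_pCons uvar_mult monom_Suc)
  then have "pCons c y = emb (pCons a f) + uvar * pCons c' z"
    by (simp only: uvar_mult)
  then show ?case
    by (rule pCons.prems)
qed

lemma omega_mult_in_kernel: "omega t w * y \<in> kernel t w"
  using gen_ideal_superset[of "{uvar ^ t, omega t w}"]
  unfolding kernel_def by (blast intro: is_ideal_mult_right gen_ideal_is_ideal)

lemma uvar_power_mult_in_kernel: "uvar ^ t * y \<in> kernel t w"
  using gen_ideal_superset[of "{uvar ^ t, omega t w}"]
  unfolding kernel_def by (blast intro: is_ideal_mult_right gen_ideal_is_ideal)

lemma kernel_subset_qgen: "kernel t w \<subseteq> qgen t w S"
  unfolding kernel_def qgen_def by (rule gen_ideal_mono) blast

lemma qgen_is_ideal: "is_ideal (qgen t w S)"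
  unfolding qgen_def by (rule gen_ideal_is_ideal)

lemma qgen_superset: "S \<subseteq> qgen t w S"
  unfolding qgen_def using gen_ideal_superset by blast

lemma qgen_minimal:
  assumes "quot_ideal t w K" and "S \<subseteq> K"
  shows "qgen t w S \<subseteq> K"
proof -
  have "{uvar ^ t, omega t w} \<subseteq> K"
    using assms(1) gen_ideal_superset unfolding quot_ideal_def kernel_def by blast
  then show ?thesis
    using assms unfolding qgen_def quot_ideal_def by (intro gen_ideal_minimal) blast+
qed

lemma quot_ideal_qgen: "quot_ideal t w (qgen t w S)"
  unfolding quot_ideal_def using qgen_is_ideal kernel_subset_qgen by blast

lemma quot_ideal_Int: "quot_ideal t w I \<Longrightarrow> quot_ideal t w J \<Longrightarrow> quot_ideal t w (I \<inter> J)"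
  unfolding quot_ideal_def using is_ideal_Int by blast

lemma omega_eq_emb_plus_uvar:
  assumes "t \<ge> 1"
  obtains z where "omega t w = emb (w 0) + uvar * z"
proof -
  obtain t' where t: "t = Suc t'"
    using assms by (cases t) auto
  have "omega t w = emb (w 0) + uvar * (\<Sum>i<t'. uvar ^ i * emb (w (Suc i)))"
    unfolding omega_def t sum.lessThan_Suc_shift by (simp add: sum_distrib_left ac_simps)
  then show ?thesis
    by (rule that)
qed

lemma qgen_uvar_subset:
  assumes "t \<ge> 1"
  shows "qgen t w {uvar} \<subseteq> {b * omega t w + c * uvar | b c. True}"
  unfolding qgen_def
proof (rule gen_ideal_minimal[OF is_ideal_linear_combinations])
  have "uvar ^ t = 0 * omega t w + uvar ^ (t - 1) * uvar"
    using assms by (simp flip: power_Suc2)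
  moreover have "omega t w = 1 * omega t w + 0 * uvar" "uvar = 0 * omega t w + 1 * uvar"
    by simp_all
  ultimately show "{uvar ^ t, omega t w} \<union> {uvar} \<subseteq> {b * omega t w + c * uvar | b c. True}"
    by blast
qed

definition level_ideal :: "'a::comm_ring_1 poly poly set \<Rightarrow> nat \<Rightarrow> 'a poly set" where
  "level_ideal K s = {f. \<exists>y. uvar ^ s * emb f + uvar ^ Suc s * y \<in> K}"

lemma is_ideal_level_ideal:
  assumes K: "is_ideal K"
  shows "is_ideal (level_ideal K s)"
proof -
  have "0 \<in> level_ideal K s"
    using is_ideal_0[OF K] unfolding level_ideal_def by (auto simp: emb_def intro!: exI[of _ 0])
  moreover have "f + g \<in> level_ideal K s" if fg: "f \<in> level_ideal K s" "g \<in> level_ideal K s" for f g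
  proof -
    obtain y z where "uvar ^ s * emb f + uvar ^ Suc s * y \<in> K" "uvar ^ s * emb g + uvar ^ Suc s * z \<in> K"
      using fg unfolding level_ideal_def by blast
    from is_ideal_add[OF K this]
    have "uvar ^ s * emb (f + g) + uvar ^ Suc s * (y + z) \<in> K"
      by (simp add: emb_add algebra_simps)
    then show ?thesis
      unfolding level_ideal_def by blast
  qed
  moreover have "q * f \<in> level_ideal K s" if f: "f \<in> level_ideal K s" for f q
  proof -
    obtain y where "uvar ^ s * emb f + uvar ^ Suc s * y \<in> K"
      using f unfolding level_ideal_def by blast
    from is_ideal_mult_left[OF K this, of "emb q"]
    have "uvar ^ s * emb (q * f) + uvar ^ Suc s * (emb q * y) \<in> K"
      by (simp add: emb_mult algebra_simps)
    then show ?thesis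
      unfolding level_ideal_def by blast
  qed
  ultimately show ?thesis
    unfolding is_ideal_def by blast
qed

lemma w0_in_level_ideal:
  assumes "t \<ge> 1" and "kernel t w \<subseteq> K"
  shows "w 0 \<in> level_ideal K s"
proof -
  obtain z where "omega t w = emb (w 0) + uvar * z"
    using omega_eq_emb_plus_uvar[OF assms(1)] .
  then have "uvar ^ s * emb (w 0) + uvar ^ Suc s * z = omega t w * uvar ^ s"
    by (simp add: algebra_simps)
  also have "\<dots> \<in> K"
    using omega_mult_in_kernel assms(2) by blast
  finally show ?thesis
    unfolding level_ideal_def by blast
qed

lemma level_ideal_generator:
  fixes w :: "nat \<Rightarrow> 'a::field poly" and v :: "nat \<Rightarrow> 'a poly"
  assumes K: "quot_ideal t w K" and t: "t \<ge> 1"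
    and irr: "\<forall>j\<in>{1..l}. irreducible (v j)" and w0: "w 0 = (\<Prod>j=1..l. v j ^ n j)"
  shows "\<exists>k. (\<forall>j\<in>{1..l}. k j \<le> n j) \<and> (\<Prod>j=1..l. v j ^ k j) \<in> level_ideal K s \<and>
    (\<forall>f\<in>level_ideal K s. (\<Prod>j=1..l. v j ^ k j) dvd f)"
proof -
  have L: "is_ideal (level_ideal K s)"
    using K by (simp add: quot_ideal_def is_ideal_level_ideal)
  obtain d where d: "d \<in> level_ideal K s" and d_dvd: "\<And>f. f \<in> level_ideal K s \<Longrightarrow> d dvd f"
    using is_ideal_principal[OF L] by blast
  have "w 0 \<in> level_ideal K s"
    using K t by (simp add: quot_ideal_def w0_in_level_ideal)
  have "\<forall>j\<in>{1..l}. prime_elem (v j)"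
    using irr field_poly_irreducible_imp_prime by blast
  moreover have "d dvd (\<Prod>j=1..l. v j ^ n j)"
    using d_dvd \<open>w 0 \<in> level_ideal K s\<close> w0 by simp
  ultimately have "\<exists>k. (\<forall>j\<in>{1..l}. k j \<le> n j) \<and>
    d dvd (\<Prod>j=1..l. v j ^ k j) \<and> (\<Prod>j=1..l. v j ^ k j) dvd d"
    by (rule dvd_prod_power_imp_associated[OF finite_atLeastAtMost])
  then obtain k where k: "\<forall>j\<in>{1..l}. k j \<le> n j"
    and d_dvd_P: "d dvd (\<Prod>j=1..l. v j ^ k j)" and P_dvd_d: "(\<Prod>j=1..l. v j ^ k j) dvd d"
    by blast
  from d_dvd_P obtain c where "(\<Prod>j=1..l. v j ^ k j) = c * d"
    by (metis dvd_def mult.commute)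
  then have "(\<Prod>j=1..l. v j ^ k j) \<in> level_ideal K s"
    using is_ideal_mult_left[OF L d] by simp
  moreover have "\<forall>f\<in>level_ideal K s. (\<Prod>j=1..l. v j ^ k j) dvd f"
    using P_dvd_d d_dvd dvd_trans by blast
  ultimately show ?thesis
    using k by blast
qed

lemma level_ideal_subset:
  assumes "is_ideal J" and "d \<in> level_ideal J s" and "\<forall>f\<in>level_ideal K s. d dvd f"
  shows "level_ideal K s \<subseteq> level_ideal J s"
proof
  fix f
  assume "f \<in> level_ideal K s"
  then obtain q where "f = q * d"
    using assms(3) by (metis dvdE mult.commute)
  then show "f \<in> level_ideal J s"
    using is_ideal_mult_left[OF is_ideal_level_ideal[OF assms(1)] assms(2)] by simp
qed

lemma eq_if_level_ideals_subset:
  assumes t: "t \<ge> 1" and K: "is_ideal K" "K \<subseteq> qgen t w {uvar}"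
    and J: "is_ideal J" "kernel t w \<subseteq> J" "J \<subseteq> K"
    and levels: "\<And>s. 1 \<le> s \<Longrightarrow> s < t \<Longrightarrow> level_ideal K s \<subseteq> level_ideal J s"
  shows "K = J"
proof -
  have approx: "\<forall>x\<in>K. \<exists>j\<in>J. \<exists>y. x = j + uvar ^ s * y" if "1 \<le> s" "s \<le> t" for s
    using that
  proof (induction s rule: dec_induct)
    case base
    show ?case
    proof
      fix x
      assume "x \<in> K"
      then obtain b c where "x = b * omega t w + c * uvar"
        using qgen_uvar_subset[OF t] K(2) by blast
      then have "x = omega t w * b + uvar ^ 1 * c"
        by (simp add: mult.commute)
      moreover have "omega t w * b \<in> J"
        using omega_mult_in_kernel J(2) by blast
      ultimately show "\<exists>j\<in>J. \<exists>y. x = j + uvar ^ 1 * y"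
        by blast
    qed
  next
    case (step s)
    have "s < t"
      using step.prems by simp
    then have IH: "\<forall>x\<in>K. \<exists>j\<in>J. \<exists>y. x = j + uvar ^ s * y"
      using step.IH by simp
    show ?case
    proof
      fix x
      assume x: "x \<in> K"
      obtain j y where j: "j \<in> J" and x_eq: "x = j + uvar ^ s * y"
        using IH x by blast
      obtain f z where y: "y = emb f + uvar * z"
        by (rule emb_uvar_decompE)
      have "uvar ^ s * emb f + uvar ^ Suc s * z = x - j"
        using x_eq y by (simp add: algebra_simps)
      also have "\<dots> \<in> K"
        using is_ideal_diff[OF K(1) x] j J(3) by blast
      finally have "f \<in> level_ideal J s"
        using levels[OF step.hyps(1) \<open>s < t\<close>] unfolding level_ideal_def by blast
      then obtain z' where j': "uvar ^ s * emb f + uvar ^ Suc s * z' \<in> J"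
        unfolding level_ideal_def by blast
      have "x = (j + (uvar ^ s * emb f + uvar ^ Suc s * z')) + uvar ^ Suc s * (z - z')"
        using x_eq y by (simp add: algebra_simps)
      then show "\<exists>j\<in>J. \<exists>y. x = j + uvar ^ Suc s * y"
        using is_ideal_add[OF J(1) j j'] by blast
    qed
  qed
  have "x \<in> J" if x: "x \<in> K" for x
  proof -
    obtain j y where "j \<in> J" "x = j + uvar ^ t * y"
      using approx[OF t order.refl] x by blast
    moreover have "uvar ^ t * y \<in> J"
      using uvar_power_mult_in_kernel J(2) by blast
    ultimately show ?thesis
      using is_ideal_add[OF J(1)] by simp
  qed
  then show ?thesis
    using J(3) by blast
qed

lemma genb_eq:
  "i < t \<Longrightarrow> genb t l v i k g =
    uvar ^ (t - 1 - i) * emb (\<Prod>j=1..l. v j ^ k j) - uvar ^ Suc (t - 1 - i) * g"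
  unfolding genb_def by (simp add: Suc_diff_Suc)

lemma form_b_from_level_generators:
  fixes w :: "nat \<Rightarrow> 'a::comm_ring_1 poly" and v :: "nat \<Rightarrow> 'a poly"
  assumes K: "quot_ideal t w K" and KU: "K \<subseteq> qgen t w {uvar}" and t: "t \<ge> 1"
    and w0: "w 0 = (\<Prod>j=1..l. v j ^ n j)"
    and kk_le: "\<And>s. \<forall>j\<in>{1..l}. kk s j \<le> n j"
    and hh: "\<And>s. uvar ^ s * emb (\<Prod>j=1..l. v j ^ kk s j) + uvar ^ Suc s * hh s \<in> K"
    and kk_dvd: "\<And>s. \<forall>f\<in>level_ideal K s. (\<Prod>j=1..l. v j ^ kk s j) dvd f"
  shows "form_b t w l v n K"
proof -
  define P where "P k = (\<Prod>j=1..l. v j ^ k j)" for k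
  have KI: "is_ideal K"
    using K by (simp add: quot_ideal_def)
  \<comment> \<open>the generator with index i of form (b) is the one chosen at level s = t - 1 - i\<close>
  define gs where "gs = filter (\<lambda>(i, k, g). \<not> (\<forall>j\<in>{1..l}. k j = n j))
    (map (\<lambda>i. (i, kk (t - 1 - i), - hh (t - 1 - i))) [0..<t - 1])"
  define J where "J = qgen t w ((\<lambda>(i, k, g). genb t l v i k g) ` set gs)"
  have sorted: "sorted_wrt (\<lambda>a b. fst a < fst b) gs"
    unfolding gs_def by (intro sorted_wrt_filter) (simp add: sorted_wrt_map)
  have bounds: "\<forall>(i, k, g) \<in> set gs. i + 2 \<le> t \<and> (\<forall>j\<in>{1..l}. k j \<le> n j) \<and>
      \<not> (\<forall>j\<in>{1..l}. k j = n j)"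
    unfolding gs_def using kk_le by auto
  have "genb t l v i (kk (t - 1 - i)) (- hh (t - 1 - i)) \<in> K" if "i < t - 1" for i
    using hh[of "t - 1 - i"] that by (simp add: genb_eq)
  then have JK: "J \<subseteq> K"
    unfolding J_def gs_def by (intro qgen_minimal[OF K]) auto
  have JI: "is_ideal J" and kernel_J: "kernel t w \<subseteq> J"
    unfolding J_def by (rule qgen_is_ideal, rule kernel_subset_qgen)
  have "P (kk s) \<in> level_ideal J s" if s: "1 \<le> s" "s < t" for s
  proof (cases "\<forall>j\<in>{1..l}. kk s j = n j")
    case True
    then have "P (kk s) = w 0"
      unfolding P_def w0 by (intro prod.cong) auto
    then show ?thesis
      using w0_in_level_ideal[OF t kernel_J] by simp
  next
    case False
    have "t - 1 - s \<in> set [0..<t - 1]" "t - 1 - (t - 1 - s) = s"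
      using s by auto
    then have "(t - 1 - s, kk s, - hh s) \<in> set gs"
      unfolding gs_def using False by (auto simp: image_iff)
    then have "genb t l v (t - 1 - s) (kk s) (- hh s) \<in> (\<lambda>(i, k, g). genb t l v i k g) ` set gs"
      by (rule rev_image_eqI) simp
    then have "genb t l v (t - 1 - s) (kk s) (- hh s) \<in> J"
      unfolding J_def using qgen_superset by blast
    then have "uvar ^ s * emb (P (kk s)) + uvar ^ Suc s * hh s \<in> J"
      using s by (simp add: genb_eq P_def)
    then show ?thesis
      unfolding level_ideal_def by blast
  qed
  then have "level_ideal K s \<subseteq> level_ideal J s" if "1 \<le> s" "s < t" for s
    using level_ideal_subset[OF JI] kk_dvd that unfolding P_def by blast
  then have "K = J"
    using eq_if_level_ideals_subset[OF t KI KU JI kernel_J JK] by blast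
  then show ?thesis
    unfolding form_b_def using sorted bounds J_def by blast
qed


lemma form_b_if_subset_uvar:
  fixes w :: "nat \<Rightarrow> 'a::field poly" and v :: "nat \<Rightarrow> 'a poly"
  assumes K: "quot_ideal t w K" and KU: "K \<subseteq> qgen t w {uvar}" and t: "t \<ge> 1"
    and irr: "\<forall>j\<in>{1..l}. irreducible (v j)" and w0: "w 0 = (\<Prod>j=1..l. v j ^ n j)"
  shows "form_b t w l v n K"
proof -
  define P where "P k = (\<Prod>j=1..l. v j ^ k j)" for k
  have "\<forall>s. \<exists>k. (\<forall>j\<in>{1..l}. k j \<le> n j) \<and> P k \<in> level_ideal K s \<and>
      (\<forall>f\<in>level_ideal K s. P k dvd f)"
    using level_ideal_generator[OF K t irr w0] unfolding P_def by blast
  then obtain kk where kk: "\<forall>s. (\<forall>j\<in>{1..l}. kk s j \<le> n j) \<and> P (kk s) \<in> level_ideal K s \<and>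
      (\<forall>f\<in>level_ideal K s. P (kk s) dvd f)"
    by (auto dest: choice)
  then have "\<forall>s. \<exists>h. uvar ^ s * emb (P (kk s)) + uvar ^ Suc s * h \<in> K"
    unfolding level_ideal_def by blast
  then obtain hh where "\<forall>s. uvar ^ s * emb (P (kk s)) + uvar ^ Suc s * hh s \<in> K"
    by (auto dest: choice)
  with kk show ?thesis
    unfolding P_def
    by (intro form_b_from_level_generators[OF K KU t w0, where kk = kk and hh = hh]) blast+
qed

lemma quot_ideal_eq_gen_ideal_insert:
  fixes w :: "nat \<Rightarrow> 'a::field poly" and v :: "nat \<Rightarrow> 'a poly"
  assumes K: "quot_ideal t w K" and t: "t \<ge> 1"
    and irr: "\<forall>j\<in>{1..l}. irreducible (v j)" and w0: "w 0 = (\<Prod>j=1..l. v j ^ n j)"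
  shows "\<exists>k r. (\<forall>j\<in>{1..l}. k j \<le> n j) \<and>
    K = gen_ideal ((K \<inter> qgen t w {uvar}) \<union> {emb (\<Prod>j=1..l. v j ^ k j) + uvar * r})"
proof -
  define P where "P k = (\<Prod>j=1..l. v j ^ k j)" for k
  have KI: "is_ideal K"
    using K by (simp add: quot_ideal_def)
  obtain k where k: "\<forall>j\<in>{1..l}. k j \<le> n j"
    and P_in: "P k \<in> level_ideal K 0" and P_dvd: "\<forall>f\<in>level_ideal K 0. P k dvd f"
    using level_ideal_generator[OF K t irr w0] unfolding P_def by blast
  obtain r where eK: "emb (P k) + uvar * r \<in> K"
    using P_in unfolding level_ideal_def by auto
  define e where "e = emb (P k) + uvar * r"
  define G where "G = gen_ideal ((K \<inter> qgen t w {uvar}) \<union> {e})"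
  have GI: "is_ideal G"
    unfolding G_def by (rule gen_ideal_is_ideal)
  have "G \<subseteq> K"
    unfolding G_def using eK unfolding e_def by (intro gen_ideal_minimal[OF KI]) blast
  moreover have "x \<in> G" if x: "x \<in> K" for x
  proof -
    obtain f y where y: "x = emb f + uvar * y"
      by (rule emb_uvar_decompE)
    with x have "f \<in> level_ideal K 0"
      unfolding level_ideal_def by auto
    then obtain q where q: "f = P k * q"
      using P_dvd by (blast elim: dvdE)
    have "uvar \<in> qgen t w {uvar}"
      using qgen_superset[of "{uvar}" t w] by simp
    moreover have "x - emb q * e = uvar * (y - emb q * r)"
      using y q unfolding e_def by (simp add: emb_mult algebra_simps)
    ultimately have "x - emb q * e \<in> qgen t w {uvar}"
      using is_ideal_mult_right[OF qgen_is_ideal] by simp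
    moreover have "x - emb q * e \<in> K"
      using is_ideal_diff[OF KI x is_ideal_mult_left[OF KI eK]] unfolding e_def .
    moreover have G_superset: "(K \<inter> qgen t w {uvar}) \<union> {e} \<subseteq> G"
      unfolding G_def by (rule gen_ideal_superset)
    ultimately have "x - emb q * e \<in> G"
      by blast
    moreover have "emb q * e \<in> G"
      using is_ideal_mult_left[OF GI] G_superset by blast
    ultimately have "(x - emb q * e) + emb q * e \<in> G"
      by (rule is_ideal_add[OF GI])
    then show ?thesis
      by simp
  qed
  ultimately have "K = G"
    by blast
  then show ?thesis
    using k unfolding G_def e_def P_def by blast
qed

theorem theorem3p2:
  fixes p m t l :: nat
    and w :: "nat \<Rightarrow> 'a::{finite, field} poly"
    and v :: "nat \<Rightarrow> 'a poly"
    and n :: "nat \<Rightarrow> nat"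
    and K :: "'a poly poly set"
  assumes "prime p" and "m \<ge> 1" and "CARD('a) = p ^ m" and "t \<ge> 1"
    and "\<forall>j\<in>{1..l}. irreducible (v j) \<and> n j > 0"
    and "\<forall>i\<in>{1..l}. \<forall>j\<in>{1..l}. i \<noteq> j \<longrightarrow> coprime (v i) (v j)"
    and "w 0 = (\<Prod>j=1..l. v j ^ n j)"
    and "quot_ideal t w K"
  shows "(K \<noteq> kernel t w \<and> K \<noteq> UNIV \<and> K \<subseteq> qgen t w {uvar}
            \<longrightarrow> form_b t w l v n K)
       \<and> (K \<noteq> kernel t w \<and> K \<noteq> UNIV \<and> \<not> K \<subseteq> qgen t w {uvar}
            \<longrightarrow> (\<exists>k r I. (\<forall>j\<in>{1..l}. k j \<le> n j) \<and>
                   quot_ideal t w I \<and> I \<subseteq> qgen t w {uvar} \<and>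
                   (I = kernel t w \<or> form_b t w l v n I) \<and>
                   K = gen_ideal (I \<union> {emb (\<Prod>j=1..l. v j ^ k j) + uvar * r})))"
proof -
  have t: "t \<ge> 1" and irr: "\<forall>j\<in>{1..l}. irreducible (v j)"
    and w0: "w 0 = (\<Prod>j=1..l. v j ^ n j)" and K: "quot_ideal t w K"
    using assms by auto
  define I where "I = K \<inter> qgen t w {uvar}"
  have I: "quot_ideal t w I"
    unfolding I_def using quot_ideal_Int[OF K quot_ideal_qgen] .
  have "form_b t w l v n I"
    using form_b_if_subset_uvar[OF I _ t irr w0] unfolding I_def by blast
  moreover obtain k r where "\<forall>j\<in>{1..l}. k j \<le> n j"
    and "K = gen_ideal (I \<union> {emb (\<Prod>j=1..l. v j ^ k j) + uvar * r})"
    using quot_ideal_eq_gen_ideal_insert[OF K t irr w0] unfolding I_def by blast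
  ultimately show ?thesis
    using form_b_if_subset_uvar[OF K _ t irr w0] I unfolding I_def by blast
qed

end
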